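(* For every $h\in G$ and $n\in\mathbb Z$, the ideal $\{h^n\}^{\#\#}\lhd\kappa G^\#$ is contained in the ideal of $\kappa G^\#$ generated by $P_n(\bar h)$.
   Context: Let $\kappa$ be a field of characteristic $0$ and $G$ a group. Let $*:\kappa G\to\kappa G$ be the $\kappa$-linear map with $g^*=g^{-1}$, $(\kappa G)^*$ its fixed points, and $A_G$ the quotient of $\kappa G$ by the two-sided ideal generated by all $ab-ba$, $a\in\kappa G$, $b\in(\kappa G)^*$; $*$ descends to $A_G$, and $\kappa G^\#=\{x\in A_G:x^*=x\}$. Group elements are identified with their images in $A_G$, and $\bar x=\tfrac12(x+x^* )$. For $L\subset G$, $L^{\#\#}$ is the ideal of $\kappa G^\#$ generated by $\{\overline{xl}-\overline{xl^{-1}}:x\in A_G,l\in L\}$. The polynomials $P_n\in\kappa[X]$ are defined by $P_0=0$, $P_1=1$, $2XP_n=P_{n-1}+P_{n+1}$ for all $n\in\mathbb Z$. *)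

theory Defs
  imports "HOL-Library.Poly_Mapping" "HOL-Computational_Algebra.Polynomial"
begin

text \<open>The group G is a type of class group_add; its group law is written additively
  (so the group product g h is g + h, the inverse g^-1 is - g, the unit is 0).\<close>

type_synonym ('g, 'k) grpalg = "'g \<Rightarrow>\<^sub>0 'k"

definition gelem :: "'g::group_add \<Rightarrow> ('g, 'k::field) grpalg" where
  "gelem g = Poly_Mapping.single g 1"

definition scal :: "'k::field \<Rightarrow> ('g::group_add, 'k) grpalg" where
  "scal c = Poly_Mapping.single 0 c"

definition gpow :: "'g::group_add \<Rightarrow> int \<Rightarrow> 'g" where
  "gpow h n = (if 0 \<le> n then ((+) h ^^ nat n) 0 else - (((+) h ^^ nat (- n)) 0))"

definition star :: "('g::group_add, 'k::field) grpalg \<Rightarrow> ('g, 'k) grpalg" where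
  "star x = Abs_poly_mapping (\<lambda>g. Poly_Mapping.lookup x (- g))"

definition twosided_ideal :: "('g::group_add, 'k::field) grpalg set \<Rightarrow> bool" where
  "twosided_ideal J \<longleftrightarrow> 0 \<in> J \<and> (\<forall>a\<in>J. \<forall>b\<in>J. a + b \<in> J)
     \<and> (\<forall>r. \<forall>a\<in>J. r * a \<in> J \<and> a * r \<in> J)"

text \<open>The kernel of the quotient map kappa G \<rightarrow> A_G: the two-sided ideal generated by
  all commutators ab - ba with b* = b.\<close>
definition Icomm :: "('g::group_add, 'k::field) grpalg set" where
  "Icomm = \<Inter>{J. twosided_ideal J \<and> {a * b - b * a | a b. star b = b} \<subseteq> J}"

text \<open>Preimage in kappa G of kappa G^# = {x \<in> A_G. x* = x}.\<close>
definition Sharp :: "('g::group_add, 'k::field) grpalg set" where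
  "Sharp = {x. star x - x \<in> Icomm}"

definition bar :: "('g::group_add, 'k::field) grpalg \<Rightarrow> ('g, 'k) grpalg" where
  "bar x = scal (1/2) * (x + star x)"

text \<open>Preimage in kappa G of the ideal of the ring kappa G^# generated by (the image of) T:
  the smallest set J with Icomm \<subseteq> J \<subseteq> Sharp that is an ideal of Sharp containing T.
  (Ideals of kappa G^# correspond to such J; containment of ideals corresponds to containment
  of preimages.)\<close>
definition sharp_ideal :: "('g::group_add, 'k::field) grpalg set \<Rightarrow> ('g, 'k) grpalg set" where
  "sharp_ideal T = \<Inter>{J. Icomm \<subseteq> J \<and> J \<subseteq> Sharp \<and> T \<subseteq> J \<and> 0 \<in> J
      \<and> (\<forall>a\<in>J. \<forall>b\<in>J. a + b \<in> J) \<and> (\<forall>r\<in>Sharp. \<forall>a\<in>J. r * a \<in> J \<and> a * r \<in> J)}"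

definition dsharp :: "'g::group_add set \<Rightarrow> ('g, 'k::field) grpalg set" where
  "dsharp L = sharp_ideal {bar (x * gelem l) - bar (x * gelem (- l)) | x l. l \<in> L}"

fun Pnat :: "nat \<Rightarrow> 'k::field poly" where
  "Pnat 0 = 0"
| "Pnat (Suc 0) = 1"
| "Pnat (Suc (Suc n)) = smult 2 [:0, 1:] * Pnat (Suc n) - Pnat n"

definition Pint :: "int \<Rightarrow> 'k::field poly" where
  "Pint n = (if 0 \<le> n then Pnat (nat n) else - Pnat (nat (- n)))"

definition peval :: "'k::field poly \<Rightarrow> ('g::group_add, 'k) grpalg \<Rightarrow> ('g, 'k) grpalg" where
  "peval p x = (\<Sum>i\<le>degree p. scal (coeff p i) * x ^ i)"

lemma Pint_rec: "smult 2 [:0, 1:] * Pint n = Pint (n - 1) + Pint (n + 1)"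
proof -
  have rec: "\<And>m. Pnat (Suc (Suc m)) = smult 2 [:0, 1:] * Pnat (Suc m) - (Pnat m :: 'a poly)"
    by simp
  consider "n \<ge> 1" | "n = 0" | "n \<le> -1" by linarith
  then show ?thesis
  proof cases
    case 1
    define m where "m = nat (n - 1)"
    have m: "n = int m + 1" using 1 by (simp add: m_def)
    have a: "nat n = Suc m" "nat (n - 1) = m" "nat (n + 1) = Suc (Suc m)" using m by auto
    show ?thesis using 1 rec[of m] by (simp add: Pint_def a)
  next
    case 2
    then show ?thesis by (simp add: Pint_def)
  next
    case 3
    define m where "m = nat (- n - 1)"
    have m: "n = - int m - 1" using 3 by (simp add: m_def)
    have a: "nat (- n) = Suc m" "nat (- (n - 1)) = Suc (Suc m)" "nat (- (n + 1)) = m" using m by auto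
    have b: "\<not> 0 \<le> n" "\<not> 0 \<le> n - 1" using 3 by auto
    show ?thesis
    proof (cases "m = 0")
      case True
      then have "n = -1" using m by simp
      then show ?thesis using rec[of 0] by (simp add: Pint_def numeral_2_eq_2)
    next
      case False
      then have "\<not> 0 \<le> n + 1" using m by simp
      then have c: "Pint n = - Pnat (Suc m)" "Pint (n - 1) = - Pnat (Suc (Suc m))"
        "Pint (n + 1) = - Pnat m" using b a unfolding Pint_def by auto
      show ?thesis unfolding c rec[of m] by (simp add: algebra_simps)
    qed
  qed
qed

end

theory Submission
  imports Defs
begin

(* Put t = bar h, d = h - h^-1 and Q = P_n(t) in the group algebra kG.
   (1) Chebyshev identity: h^n - h^-n = P_n(t) * d holds already in kG, because
       f(n) = h^n - h^-n satisfies the same recursion f(n+1) = 2t f(n) - f(n-1) as P_n(t),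
       and f(-n) = -f(n), P_(-n) = -P_n.
   (2) Q is self-adjoint (t is) and commutes with d (d commutes with t).
   (3) For self-adjoint Q and any y:  bar(y Q) = Q bar(y) + 1/2 (y Q - Q y);  the first
       summand lies in every ideal of kG^# containing Q, the second lies in the commutator
       ideal Icomm.  Hence bar(y Q) lies in the ideal of kG^# generated by Q.
   A generator bar(x h^n) - bar(x h^-n) of {h^n}^## equals bar((x d) Q) by (1) and (2), so
   it lies in the ideal generated by Q, which gives the inclusion. *)

lemma poly_mapping_single_induct [case_names zero add]:
  fixes f :: "'a \<Rightarrow>\<^sub>0 'b::monoid_add"
  assumes "P 0" and "\<And>f g c. P f \<Longrightarrow> P (f + Poly_Mapping.single g c)"
  shows "P f"
proof (induct f rule: Poly_Mapping.update_induct)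
  case const
  show ?case using assms(1) .
next
  case (update f a b)
  have "Poly_Mapping.update a b f = f + Poly_Mapping.single a b"
    using update(1)
    by (intro poly_mapping_eqI)
      (auto simp: lookup_update lookup_add lookup_single in_keys_iff when_def)
  then show ?case using assms(2) update by simp
qed

lemma lookup_star: "Poly_Mapping.lookup (star x) g = Poly_Mapping.lookup x (- g)"
proof -
  have "{g. Poly_Mapping.lookup x (- g) \<noteq> 0} = uminus ` {g. Poly_Mapping.lookup x g \<noteq> 0}"
    by (auto intro: image_eqI[where x="- _"])
  then have "finite {g. Poly_Mapping.lookup x (- g) \<noteq> 0}" by simp
  then show ?thesis unfolding star_def by simp
qed

lemma star_add: "star (x + y) = star x + star y"
  by (intro poly_mapping_eqI) (simp add: lookup_star lookup_add)

lemma star_zero [simp]: "star 0 = 0"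
  by (intro poly_mapping_eqI) (simp add: lookup_star)

lemma star_diff: "star (x - y) = star x - star y"
  by (intro poly_mapping_eqI) (simp add: lookup_star lookup_minus)

lemma star_star [simp]: "star (star x) = x"
  by (intro poly_mapping_eqI) (simp add: lookup_star)

lemma star_single: "star (Poly_Mapping.single g c) = Poly_Mapping.single (- g) c"
  by (intro poly_mapping_eqI) (auto simp: lookup_star lookup_single when_def)

lemma star_sum: "star (sum f A) = (\<Sum>i\<in>A. star (f i))"
  by (induct A rule: infinite_finite_induct) (simp_all add: star_add)

text \<open>The involution reverses products: it is an anti-automorphism of kG, since
  (g h)^-1 = h^-1 g^-1 on group elements.\<close>
lemma star_mult: "star (x * y) = star y * (star x :: ('g::group_add, 'k::field) grpalg)"
proof (induct x arbitrary: y rule: poly_mapping_single_induct)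
  case zero
  show ?case by simp
next
  case (add f g c)
  have "star (Poly_Mapping.single g c * y) = star y * star (Poly_Mapping.single g c)"
  proof (induct y rule: poly_mapping_single_induct)
    case zero
    show ?case by simp
  next
    case (add f' g' c')
    then show ?case
      by (simp add: distrib_left distrib_right star_add mult_single star_single minus_add
          mult.commute)
  qed
  then show ?case using add by (simp add: distrib_right distrib_left star_add)
qed

lemma scal_mult: "scal a * scal b = (scal (a * b) :: ('g::group_add, 'k::field) grpalg)"
  by (simp add: scal_def mult_single)

lemma scal_add: "scal (a + b) = (scal a + scal b :: ('g::group_add, 'k::field) grpalg)"
  by (simp add: scal_def single_add)

lemma scal_minus: "scal (- a) = (- scal a :: ('g::group_add, 'k::field) grpalg)"
  by (simp add: scal_def single_uminus)

lemma scal_0 [simp]: "scal 0 = 0"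
  by (simp add: scal_def)

lemma scal_1 [simp]: "scal 1 = 1"
  by (simp add: scal_def)

lemma scal_comm: "scal c * x = x * (scal c :: ('g::group_add, 'k::field) grpalg)"
proof (induct x rule: poly_mapping_single_induct)
  case zero
  show ?case by simp
next
  case (add f g d)
  then show ?case
    by (simp add: scal_def distrib_left distrib_right mult_single mult.commute)
qed

lemma scal_left_commute:
  "x * (scal c * y) = scal c * (x * y :: ('g::group_add, 'k::field) grpalg)"
  by (metis mult.assoc scal_comm)

lemma star_scal: "star (scal c) = scal c"
  by (simp add: scal_def star_single)

lemma star_gelem: "star (gelem g) = gelem (- g)"
  by (simp add: gelem_def star_single)

lemma gelem_mult: "gelem a * gelem b = (gelem (a + b) :: ('g::group_add, 'k::field) grpalg)"
  by (simp add: gelem_def mult_single)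

lemma peval_upto:
  assumes "degree p \<le> N"
  shows "peval p x = (\<Sum>i\<le>N. scal (coeff p i) * x ^ i)"
proof -
  have "(\<Sum>i\<le>N. scal (coeff p i) * x ^ i) = (\<Sum>i\<le>degree p. scal (coeff p i) * x ^ i)
     + (\<Sum>i\<in>{degree p<..N}. scal (coeff p i) * x ^ i)"
    using assms by (subst sum.union_disjoint[symmetric]) (auto intro!: sum.cong)
  also have "(\<Sum>i\<in>{degree p<..N}. scal (coeff p i) * x ^ i) = 0"
    by (intro sum.neutral) (auto simp: coeff_eq_0)
  finally show ?thesis by (simp add: peval_def)
qed

lemma peval_0 [simp]: "peval 0 x = 0"
  by (simp add: peval_def)

lemma peval_1 [simp]: "peval 1 x = 1"
  by (simp add: peval_def)

lemma peval_add: "peval (p + q) x = peval p x + peval q x"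
proof -
  let ?N = "max (degree p) (degree q)"
  have "degree (p + q) \<le> ?N" by (rule degree_add_le) auto
  then show ?thesis
    by (simp add: peval_upto[of _ ?N] scal_add distrib_right sum.distrib)
qed

lemma peval_minus: "peval (- p) x = - peval p x"
  by (simp add: peval_def scal_minus sum_negf)

lemma peval_diff: "peval (p - q) x = peval p x - peval q x"
  using peval_add[of p "- q" x] by (simp add: peval_minus)

lemma peval_smult: "peval (smult c p) x = scal c * peval p x"
proof -
  have "degree (smult c p) \<le> degree p" by simp
  then show ?thesis
    by (simp add: peval_upto[of _ "degree p"] sum_distrib_left scal_mult[symmetric] mult.assoc)
qed

lemma peval_pCons_0:
  "peval (pCons 0 q) x = x * peval q (x :: ('g::group_add, 'k::field) grpalg)"
proof -
  have "degree (pCons 0 q) \<le> Suc (degree q)" by (simp add: degree_pCons_le)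
  then have "peval (pCons 0 q) x = (\<Sum>i\<le>Suc (degree q). scal (coeff (pCons 0 q) i) * x ^ i)"
    by (rule peval_upto)
  also have "\<dots> = (\<Sum>i\<le>degree q. scal (coeff q i) * x ^ Suc i)"
    by (subst sum.atMost_Suc_shift) simp
  also have "\<dots> = (\<Sum>i\<le>degree q. x * (scal (coeff q i) * x ^ i))"
    by (simp add: scal_left_commute)
  finally show ?thesis by (simp add: peval_def sum_distrib_left)
qed

lemma peval_commute:
  assumes "a * x = x * a"
  shows "a * peval p x = peval p x * (a :: ('g::group_add, 'k::field) grpalg)"
proof -
  have "a * x ^ i = x ^ i * a" for i
    using power_commuting_commutes[of x a i] assms by simp
  then show ?thesis
    unfolding peval_def sum_distrib_left sum_distrib_right
    by (simp add: scal_left_commute mult.assoc)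
qed

lemma star_peval:
  assumes "star x = x"
  shows "star (peval p x) = peval p (x :: ('g::group_add, 'k::field) grpalg)"
proof -
  have "star (x ^ i) = x ^ i" for i
    by (induct i) (simp_all add: star_mult assms power_commutes star_scal[of 1, simplified])
  then show ?thesis
    unfolding peval_def star_sum by (simp add: star_mult star_scal scal_comm)
qed

lemma two_bar: "scal 2 * bar x = x + (star x :: ('g::group_add, 'k::field_char_0) grpalg)"
  by (simp add: bar_def mult.assoc[symmetric] scal_mult)

lemma bar_diff: "bar a - bar b = bar (a - b :: ('g::group_add, 'k::field) grpalg)"
  by (simp add: bar_def star_diff algebra_simps)

lemma star_bar: "star (bar y) = bar (y :: ('g::group_add, 'k::field) grpalg)"
  by (simp add: bar_def star_mult star_add star_scal scal_comm add.commute)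

lemma bar_mult_self_adjoint:
  assumes "star Q = Q"
  shows "bar (y * Q) = Q * bar y + scal (1/2) * (y * Q - Q * (y :: ('g::group_add, 'k::field) grpalg))"
  unfolding bar_def star_mult assms by (simp add: scal_left_commute algebra_simps)

section \<open>The Chebyshev identity\<close>

definition gpow_nat :: "'g::group_add \<Rightarrow> nat \<Rightarrow> 'g" where
  "gpow_nat h m = ((+) h ^^ m) 0"

lemma gpow_nat_0 [simp]: "gpow_nat h 0 = 0"
  by (simp add: gpow_nat_def)

lemma gpow_nat_Suc: "gpow_nat h (Suc m) = h + gpow_nat h m"
  by (simp add: gpow_nat_def)

lemma gpow_nat_Suc_right: "gpow_nat h (Suc m) = gpow_nat h m + h"
proof (induct m)
  case 0
  show ?case by (simp add: gpow_nat_Suc)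
next
  case (Suc m)
  have "gpow_nat h (Suc (Suc m)) = h + (gpow_nat h m + h)"
    by (simp only: gpow_nat_Suc[of h "Suc m"] Suc)
  also have "\<dots> = gpow_nat h (Suc m) + h"
    by (simp only: gpow_nat_Suc add.assoc)
  finally show ?case .
qed

lemma gpow_gpow_nat: "gpow h n = (if 0 \<le> n then gpow_nat h (nat n) else - gpow_nat h (nat (- n)))"
  by (simp add: gpow_def gpow_nat_def)

text \<open>d = h - h^-1 commutes with h + h^-1, hence with t = bar h.\<close>
lemma bar_gelem_commute:
  "(gelem h - gelem (- h)) * bar (gelem h) = bar (gelem h) * (gelem h - (gelem (- h) :: ('g::group_add, 'k::field) grpalg))"
proof -
  have "(gelem h - gelem (- h)) * (gelem h + gelem (- h))
      = (gelem h + gelem (- h)) * (gelem h - (gelem (- h) :: ('g, 'k) grpalg))"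
    by (simp add: algebra_simps gelem_mult)
  then show ?thesis
    unfolding bar_def star_gelem by (metis mult.assoc scal_comm)
qed

lemma gelem_gpow_nat_rec:
  fixes h :: "'g::group_add"
  shows "(gelem h + gelem (- h)) * (gelem (gpow_nat h (Suc m)) - gelem (- gpow_nat h (Suc m)))
    - (gelem (gpow_nat h m) - gelem (- gpow_nat h m))
    = gelem (gpow_nat h (Suc (Suc m))) - (gelem (- gpow_nat h (Suc (Suc m))) :: ('g, 'k::field) grpalg)"
proof -
  let ?s = "gpow_nat h (Suc m)"
  have h_s: "h + ?s = gpow_nat h (Suc (Suc m))"
    by (simp only: gpow_nat_Suc)
  have neg_h_s: "- h + ?s = gpow_nat h m"
    by (simp add: gpow_nat_Suc add.assoc[symmetric])
  have h_neg_s: "h + - ?s = - gpow_nat h m"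
    by (simp only: gpow_nat_Suc_right minus_add add.assoc[symmetric] add.right_inverse add_0_left)
  have neg_h_neg_s: "- h + - ?s = - gpow_nat h (Suc (Suc m))"
    by (simp add: gpow_nat_Suc_right[of h "Suc m"] minus_add)
  have "(gelem h + gelem (- h)) * (gelem ?s - gelem (- ?s))
      = (gelem (h + ?s) - gelem (h + - ?s)) + (gelem (- h + ?s) - (gelem (- h + - ?s) :: ('g, 'k) grpalg))"
    by (simp only: distrib_right right_diff_distrib gelem_mult add_diff_add)
  also have "\<dots> = (gelem (gpow_nat h (Suc (Suc m))) - gelem (- gpow_nat h m))
      + (gelem (gpow_nat h m) - gelem (- gpow_nat h (Suc (Suc m))))"
    by (simp only: h_s neg_h_s h_neg_s neg_h_neg_s)
  finally show ?thesis
    by simp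
qed

lemma chebyshev_nat:
  fixes h :: "'g::group_add"
  shows "gelem (gpow_nat h m) - gelem (- gpow_nat h m) =
    peval (Pnat m) (bar (gelem h)) * (gelem h - (gelem (- h) :: ('g, 'k::field_char_0) grpalg))"
proof (induct m rule: Pnat.induct)
  case 1
  show ?case by simp
next
  case 2
  show ?case by (simp add: gpow_nat_Suc)
next
  case (3 m)
  let ?t = "bar (gelem h) :: ('g, 'k) grpalg"
  let ?d = "gelem h - (gelem (- h) :: ('g, 'k) grpalg)"
  have "peval (Pnat (Suc (Suc m))) ?t * ?d
      = (scal 2 * ?t) * (peval (Pnat (Suc m)) ?t * ?d) - peval (Pnat m) ?t * ?d"
    by (simp add: peval_diff peval_smult peval_pCons_0 left_diff_distrib mult.assoc
        scal_left_commute)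
  also have "\<dots> = gelem (gpow_nat h (Suc (Suc m))) - gelem (- gpow_nat h (Suc (Suc m)))"
    by (simp only: 3[symmetric] two_bar star_gelem gelem_gpow_nat_rec)
  finally show ?case by simp
qed

lemma chebyshev_int:
  fixes h :: "'g::group_add"
  shows "gelem (gpow h n) - gelem (- gpow h n) =
    peval (Pint n) (bar (gelem h)) * (gelem h - (gelem (- h) :: ('g, 'k::field_char_0) grpalg))"
proof (cases "0 \<le> n")
  case True
  then show ?thesis using chebyshev_nat[of h "nat n"] by (simp add: gpow_gpow_nat Pint_def)
next
  case False
  have "gelem (gpow h n) - gelem (- gpow h n)
      = - (gelem (gpow_nat h (nat (- n))) - (gelem (- gpow_nat h (nat (- n))) :: ('g, 'k) grpalg))"
    using False by (simp add: gpow_gpow_nat)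
  also have "\<dots> = - (peval (Pnat (nat (- n))) (bar (gelem h)) * (gelem h - gelem (- h)))"
    by (simp only: chebyshev_nat)
  finally show ?thesis using False by (simp add: Pint_def peval_minus)
qed

section \<open>Ideals of kG^#\<close>

text \<open>Preimages in kG of ideals of kG^#: ideals of the ring Sharp containing Icomm.\<close>
definition sharp_ideal_closed :: "('g::group_add, 'k::field) grpalg set \<Rightarrow> bool" where
  "sharp_ideal_closed J \<longleftrightarrow> Icomm \<subseteq> J \<and> J \<subseteq> Sharp \<and> 0 \<in> J
      \<and> (\<forall>a\<in>J. \<forall>b\<in>J. a + b \<in> J) \<and> (\<forall>r\<in>Sharp. \<forall>a\<in>J. r * a \<in> J \<and> a * r \<in> J)"

lemma sharp_ideal_subset:
  assumes "\<And>J. sharp_ideal_closed J \<Longrightarrow> T \<subseteq> J \<Longrightarrow> S \<subseteq> J"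
  shows "sharp_ideal S \<subseteq> sharp_ideal T"
  unfolding sharp_ideal_def using assms by (intro Inter_anti_mono) (auto simp: sharp_ideal_closed_def)

lemma bar_Sharp: "bar y \<in> (Sharp :: ('g::group_add, 'k::field) grpalg set)"
  unfolding Sharp_def Icomm_def twosided_ideal_def by (simp add: star_bar)

lemma commutator_Icomm:
  "star b = b \<Longrightarrow> r * (a * b - b * a) \<in> (Icomm :: ('g::group_add, 'k::field) grpalg set)"
  unfolding Icomm_def twosided_ideal_def by blast

lemma bar_mult_mem:
  assumes J: "sharp_ideal_closed J" and "Q \<in> J" and Q: "star Q = Q"
  shows "bar (y * Q) \<in> (J :: ('g::group_add, 'k::field) grpalg set)"
proof -
  have "Q * bar y \<in> J"
    using J \<open>Q \<in> J\<close> bar_Sharp unfolding sharp_ideal_closed_def by blast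
  moreover have "scal (1/2) * (y * Q - Q * y) \<in> J"
    using J commutator_Icomm[OF Q] by (auto simp: sharp_ideal_closed_def)
  ultimately show ?thesis
    using J by (simp add: bar_mult_self_adjoint[OF Q] sharp_ideal_closed_def)
qed

lemma dsharp_generator_eq:
  fixes h :: "'g::group_add" and n :: int
  defines "Q \<equiv> peval (Pint n) (bar (gelem h)) :: ('g, 'k::field_char_0) grpalg"
  shows "bar (x * gelem (gpow h n)) - bar (x * gelem (- gpow h n))
    = bar ((x * (gelem h - gelem (- h))) * Q)"
proof -
  have "Q * (gelem h - gelem (- h)) = (gelem h - gelem (- h)) * Q"
    unfolding Q_def by (rule peval_commute[symmetric]) (rule bar_gelem_commute)
  then show ?thesis
    by (simp add: bar_diff right_diff_distrib[symmetric] chebyshev_int mult.assoc Q_def)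
qed

theorem mainTheorem11:
  fixes h :: "'g::group_add" and n :: int
  shows "(dsharp {gpow h n} :: ('g, 'k::field_char_0) grpalg set)
           \<subseteq> sharp_ideal {peval (Pint n) (bar (gelem h))}"
  unfolding dsharp_def
proof (rule sharp_ideal_subset)
  fix J :: "('g, 'k) grpalg set"
  let ?Q = "peval (Pint n) (bar (gelem h)) :: ('g, 'k) grpalg"
  assume J: "sharp_ideal_closed J" and "{?Q} \<subseteq> J"
  have Q_self_adjoint: "star ?Q = ?Q"
    by (rule star_peval) (rule star_bar)
  have "bar (x * gelem (gpow h n)) - bar (x * gelem (- gpow h n)) \<in> J" for x
    unfolding dsharp_generator_eq
    using bar_mult_mem[OF J _ Q_self_adjoint] \<open>{?Q} \<subseteq> J\<close> by simp
  then show "{bar (x * gelem l) - bar (x * gelem (- l)) |x l. l \<in> {gpow h n}} \<subseteq> J"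
    by blast
qed

end
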